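(* Let $m \ge 2$ and $n \ge 2m-1$ be integers. Then for every real $r$ with $|r|<1$, $$\int_{-1}^1 \frac{U_n(s)(1-s^2)^{m-\frac{1}{2}}}{(s-r)^2}\,ds = \pi(-1)^{m}\left(\frac{1}{2}\right)^{2m-2}\sum_{j=0}^{2m-2}(-1)^j\binom{2m-2}{j}(n+3-2m+2j)\,U_{n+2-2m+2j}(r),$$ where the integral is a Hadamard finite-part integral.
   Context: $U_k(s)=\frac{\sin((k+1)\cos^{-1}s)}{\sin(\cos^{-1}s)}$ is the Tchebyshev polynomial of the second kind. For a positive integer $\alpha\ge 2$ and $|r|<1$, the integral $\int_{-1}^1 \frac{D(s)}{(s-r)^\alpha}ds$ is understood in the Hadamard finite-part sense; in particular it satisfies $\int_{-1}^1 \frac{D(s)}{(s-r)^{\alpha}}ds=\frac{1}{\alpha-1}\frac{d}{dr}\int_{-1}^1\frac{D(s)}{(s-r)^{\alpha-1}}ds$, where for $\alpha-1=1$ the right-hand integral is a Cauchy principal value. $\binom{a}{j}=\frac{a!}{j!(a-j)!}$. *)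

theory Defs
  imports "HOL-Analysis.Analysis"
begin

definition chebU :: "nat \<Rightarrow> real \<Rightarrow> real" where
  "chebU k s = sin ((real k + 1) * arccos s) / sin (arccos s)"

definition cpv :: "(real \<Rightarrow> real) \<Rightarrow> real \<Rightarrow> real" where
  "cpv D r = Lim (at_right 0)
     (\<lambda>\<epsilon>. integral {-1..r-\<epsilon>} (\<lambda>s. D s / (s - r)) + integral {r+\<epsilon>..1} (\<lambda>s. D s / (s - r)))"

text \<open>Hadamard finite-part integral of D(s)/(s-r)^2 over [-1,1], via
  fp_2 = (1/(2-1)) d/dr cpv.\<close>
definition hadamard2 :: "(real \<Rightarrow> real) \<Rightarrow> real \<Rightarrow> real" where
  "hadamard2 D r = deriv (cpv D) r"

end

(*
  With s = cos t, the integrand is sin t ^ (2m-2) * sin ((n+1) t), and expanding the even power of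
  sin t = (e^(it) - e^(-it)) / 2i turns it into a combination of sin (k t) with frequencies
  k = n + 3 + 2j - 2m >= 1.  The principal value of sin (k arccos s) / (s - r) is - pi T_k(r),
  where T_k(r) = cos (k arccos r): for k = 1 by an explicit logarithmic antiderivative, and in
  general by the recurrence sin ((k+2) t) = 2 cos t sin ((k+1) t) - sin (k t), splitting
  2 s = 2 (s - r) + 2 r so that the first part leaves an ordinary integral.  The finite-part
  integral is the r-derivative of the principal value, and T_k' = k U_(k-1).
*)

theory Submission
  imports Defs
begin

text \<open>Existence of the principal value \<^const>\<open>cpv\<close> with value \<open>L\<close>; integrability of the
  truncated pieces is recorded as well, so that principal values add.\<close>
definition has_cpv :: "(real \<Rightarrow> real) \<Rightarrow> real \<Rightarrow> real \<Rightarrow> bool" where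
  "has_cpv D r L \<longleftrightarrow>
     (\<forall>\<^sub>F \<epsilon> in at_right 0. (\<lambda>s. D s / (s - r)) integrable_on {-1..r-\<epsilon>}
                          \<and> (\<lambda>s. D s / (s - r)) integrable_on {r+\<epsilon>..1}) \<and>
     ((\<lambda>\<epsilon>. integral {-1..r-\<epsilon>} (\<lambda>s. D s / (s - r))
           + integral {r+\<epsilon>..1} (\<lambda>s. D s / (s - r))) \<longlongrightarrow> L) (at_right 0)"

lemma cpv_eqI: "has_cpv D r L \<Longrightarrow> cpv D r = L"
  unfolding has_cpv_def cpv_def by (auto intro: tendsto_Lim)

lemma has_cpv_zero: "has_cpv (\<lambda>s. 0) r 0"
  unfolding has_cpv_def by (simp add: integrable_0)

lemma has_cpv_add:
  assumes "has_cpv f r L" "has_cpv g r M"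
  shows "has_cpv (\<lambda>s. f s + g s) r (L + M)"
proof -
  let ?I = "\<lambda>h \<epsilon>. integral {-1..r-\<epsilon>} (\<lambda>s. h s / (s - r))
                 + integral {r+\<epsilon>..1} (\<lambda>s. h s / (s - r))"
  have int: "\<forall>\<^sub>F \<epsilon> in at_right 0.
      ((\<lambda>s. f s / (s - r)) integrable_on {-1..r-\<epsilon>}
        \<and> (\<lambda>s. f s / (s - r)) integrable_on {r+\<epsilon>..1}) \<and>
      ((\<lambda>s. g s / (s - r)) integrable_on {-1..r-\<epsilon>}
        \<and> (\<lambda>s. g s / (s - r)) integrable_on {r+\<epsilon>..1})"
    using assms[unfolded has_cpv_def, THEN conjunct1] by (rule eventually_conj)
  have "((\<lambda>\<epsilon>. ?I f \<epsilon> + ?I g \<epsilon>) \<longlongrightarrow> L + M) (at_right 0)"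
    using assms unfolding has_cpv_def by (intro tendsto_add) auto
  moreover have "\<forall>\<^sub>F \<epsilon> in at_right 0. ?I f \<epsilon> + ?I g \<epsilon> = ?I (\<lambda>s. f s + g s) \<epsilon>"
    using int by eventually_elim (simp add: add_divide_distrib integral_add)
  ultimately have "(?I (\<lambda>s. f s + g s) \<longlongrightarrow> L + M) (at_right 0)"
    by (rule Lim_transform_eventually)
  moreover have "\<forall>\<^sub>F \<epsilon> in at_right 0. (\<lambda>s. (f s + g s) / (s - r)) integrable_on {-1..r-\<epsilon>}
      \<and> (\<lambda>s. (f s + g s) / (s - r)) integrable_on {r+\<epsilon>..1}"
    using int by eventually_elim (simp add: add_divide_distrib integrable_add)
  ultimately show ?thesis
    unfolding has_cpv_def by blast
qed

lemma has_cpv_cmult: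
  assumes "has_cpv f r L"
  shows "has_cpv (\<lambda>s. c * f s) r (c * L)"
proof -
  have eq: "(\<lambda>s. c * f s / (s - r)) = (\<lambda>s. c * (f s / (s - r)))"
    by auto
  show ?thesis
    unfolding has_cpv_def eq integral_mult_right distrib_left[symmetric]
  proof
    show "\<forall>\<^sub>F \<epsilon> in at_right 0. (\<lambda>s. c * (f s / (s - r))) integrable_on {-1..r-\<epsilon>}
        \<and> (\<lambda>s. c * (f s / (s - r))) integrable_on {r+\<epsilon>..1}"
      using assms unfolding has_cpv_def
      by (elim conjE eventually_mono) (metis integrable_on_mult_right)
    show "((\<lambda>\<epsilon>. c * (integral {-1..r-\<epsilon>} (\<lambda>s. f s / (s - r))
        + integral {r+\<epsilon>..1} (\<lambda>s. f s / (s - r)))) \<longlongrightarrow> c * L) (at_right 0)"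
      using assms unfolding has_cpv_def by (intro tendsto_mult_left) simp
  qed
qed

lemma has_cpv_sum:
  assumes "\<And>j. j \<in> J \<Longrightarrow> has_cpv (f j) r (L j)"
  shows "has_cpv (\<lambda>s. \<Sum>j\<in>J. f j s) r (\<Sum>j\<in>J. L j)"
  using assms
  by (induction J rule: infinite_finite_induct) (auto intro: has_cpv_zero has_cpv_add)

lemma has_cpv_cong:
  assumes "\<And>s. s \<in> {-1..1} \<Longrightarrow> f s = g s" "\<bar>r\<bar> < 1" "has_cpv f r L"
  shows "has_cpv g r L"
proof -
  have "\<forall>\<^sub>F \<epsilon> in at_right 0. \<forall>s \<in> {-1..r-\<epsilon>} \<union> {r+\<epsilon>..1}. f s / (s - r) = g s / (s - r)"
    using eventually_at_right_less[of 0] by eventually_elim (use assms(1,2) in auto)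
  then have "\<forall>\<^sub>F \<epsilon> in at_right 0.
      ((\<lambda>s. f s / (s - r)) integrable_on {-1..r-\<epsilon>}
        \<longleftrightarrow> (\<lambda>s. g s / (s - r)) integrable_on {-1..r-\<epsilon>}) \<and>
      ((\<lambda>s. f s / (s - r)) integrable_on {r+\<epsilon>..1}
        \<longleftrightarrow> (\<lambda>s. g s / (s - r)) integrable_on {r+\<epsilon>..1}) \<and>
      integral {-1..r-\<epsilon>} (\<lambda>s. f s / (s - r)) + integral {r+\<epsilon>..1} (\<lambda>s. f s / (s - r)) =
      integral {-1..r-\<epsilon>} (\<lambda>s. g s / (s - r)) + integral {r+\<epsilon>..1} (\<lambda>s. g s / (s - r))"
    by eventually_elim
      (intro conjI integrable_cong arg_cong2[where f = "(+)"] integral_cong; auto)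
  with assms(3) show ?thesis
    unfolding has_cpv_def by (auto elim: Lim_transform_eventually eventually_elim2)
qed

lemma has_cpv_mult_diff:
  assumes g: "g integrable_on {-1..1}" and r: "\<bar>r\<bar> < 1"
  shows "has_cpv (\<lambda>s. (s - r) * g s) r (integral {-1..1} g)"
proof -
  have pieces: "\<forall>\<^sub>F \<epsilon> in at_right 0. g integrable_on {-1..r-\<epsilon>} \<and> g integrable_on {r+\<epsilon>..1} \<and>
      (\<forall>s \<in> {-1..r-\<epsilon>} \<union> {r+\<epsilon>..1}. (s - r) * g s / (s - r) = g s)"
    using eventually_at_right_less[of 0]
    by eventually_elim (use r in \<open>auto simp: abs_less_iff intro!: integrable_on_subinterval[OF g]\<close>)
  have cont: "isCont (\<lambda>x. integral {-1..x} g) r" "isCont (\<lambda>x. integral {x..1} g) r"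
    using r by (auto intro!: continuous_on_interior indefinite_integral_continuous_1
        indefinite_integral_continuous_1' g)
  have "((\<lambda>\<epsilon>. integral {-1..r-\<epsilon>} g + integral {r+\<epsilon>..1} g)
      \<longlongrightarrow> integral {-1..r} g + integral {r..1} g) (at_right 0)"
    by (intro tendsto_add isCont_tendsto_compose[OF cont(1)] isCont_tendsto_compose[OF cont(2)]
        tendsto_eq_intros) auto
  also have "integral {-1..r} g + integral {r..1} g = integral {-1..1} g"
    by (rule Henstock_Kurzweil_Integration.integral_combine) (use r g in auto)
  finally have lim: "((\<lambda>\<epsilon>. integral {-1..r-\<epsilon>} g + integral {r+\<epsilon>..1} g)
      \<longlongrightarrow> integral {-1..1} g) (at_right 0)" .
  show ?thesis
    unfolding has_cpv_def
  proof
    show "\<forall>\<^sub>F \<epsilon> in at_right 0. (\<lambda>s. (s - r) * g s / (s - r)) integrable_on {-1..r-\<epsilon>}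
        \<and> (\<lambda>s. (s - r) * g s / (s - r)) integrable_on {r+\<epsilon>..1}"
      using pieces by eventually_elim (metis (no_types, lifting) UnCI integrable_cong)
    show "((\<lambda>\<epsilon>. integral {-1..r-\<epsilon>} (\<lambda>s. (s - r) * g s / (s - r))
        + integral {r+\<epsilon>..1} (\<lambda>s. (s - r) * g s / (s - r))) \<longlongrightarrow> integral {-1..1} g) (at_right 0)"
      using lim by (rule Lim_transform_eventually)
        (use pieces in \<open>eventually_elim, metis (no_types, lifting) UnCI integral_cong\<close>)
  qed
qed

lemma has_cpv_by_antiderivative:
  assumes r: "\<bar>r\<bar> < 1" and A: "continuous_on {-1..1} A"
    and deriv: "\<And>s. -1 < s \<Longrightarrow> s < 1 \<Longrightarrow> s \<noteq> r \<Longrightarrow>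
       ((\<lambda>s. A s + c * ln \<bar>s - r\<bar>) has_real_derivative D s / (s - r)) (at s)"
  shows "has_cpv D r (A 1 - A (-1) + c * ln ((1 - r) / (1 + r)))"
proof -
  define F where "F s = A s + c * ln \<bar>s - r\<bar>" for s
  have ftc: "((\<lambda>s. D s / (s - r)) has_integral F b - F a) {a..b}"
    if "-1 \<le> a" "a \<le> b" "b \<le> 1" "r \<notin> {a..b}" for a b
  proof (rule fundamental_theorem_of_calculus_interior)
    have "continuous_on {a..b} A"
      using that by (auto intro: continuous_on_subset[OF A])
    then show "continuous_on {a..b} F"
      unfolding F_def using that by (intro continuous_intros) auto
    show "(F has_vector_derivative D s / (s - r)) (at s)" if "s \<in> {a<..<b}" for s
      using deriv \<open>s \<in> {a<..<b}\<close> \<open>-1 \<le> a\<close> \<open>b \<le> 1\<close> \<open>r \<notin> {a..b}\<close>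
      unfolding F_def has_real_derivative_iff_has_vector_derivative[symmetric] by force
  qed (use that in auto)
  define L where "L = A 1 - A (-1) + c * ln ((1 - r) / (1 + r))"
  have pieces: "\<forall>\<^sub>F \<epsilon> in at_right 0.
      ((\<lambda>s. D s / (s - r)) has_integral F (r - \<epsilon>) - F (-1)) {-1..r-\<epsilon>} \<and>
      ((\<lambda>s. D s / (s - r)) has_integral F 1 - F (r + \<epsilon>)) {r+\<epsilon>..1} \<and>
      F (r - \<epsilon>) - F (-1) + (F 1 - F (r + \<epsilon>)) = A (r - \<epsilon>) - A (r + \<epsilon>) + L"
    using r by (auto simp: eventually_at_right_field intro!: exI[of _ "1 - \<bar>r\<bar>"] ftc)
      (auto simp: F_def L_def ln_div algebra_simps)
  have "isCont A r"
    using r by (intro continuous_on_interior[OF A]) auto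
  then have "((\<lambda>\<epsilon>. A (r - \<epsilon>) - A (r + \<epsilon>) + L) \<longlongrightarrow> A r - A r + L) (at_right 0)"
    by (intro tendsto_intros isCont_tendsto_compose[where g = A] tendsto_eq_intros) auto
  then have "((\<lambda>\<epsilon>. A (r - \<epsilon>) - A (r + \<epsilon>) + L) \<longlongrightarrow> L) (at_right 0)"
    by simp
  then have "((\<lambda>\<epsilon>. integral {-1..r-\<epsilon>} (\<lambda>s. D s / (s - r))
      + integral {r+\<epsilon>..1} (\<lambda>s. D s / (s - r))) \<longlongrightarrow> L) (at_right 0)"
    by (rule Lim_transform_eventually)
      (use pieces in \<open>eventually_elim, metis integral_unique\<close>)
  moreover have "\<forall>\<^sub>F \<epsilon> in at_right 0. (\<lambda>s. D s / (s - r)) integrable_on {-1..r-\<epsilon>}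
      \<and> (\<lambda>s. D s / (s - r)) integrable_on {r+\<epsilon>..1}"
    using pieces by eventually_elim (auto simp: integrable_on_def)
  ultimately show ?thesis
    unfolding has_cpv_def L_def by blast
qed

lemma DERIV_ln_abs_diff:
  assumes "s \<noteq> (r::real)"
  shows "((\<lambda>x. ln \<bar>x - r\<bar>) has_real_derivative 1 / (s - r)) (at s)"
proof (cases "s > r")
  case True
  have "((\<lambda>x. ln (x - r)) has_real_derivative 1 / (s - r)) (at s)"
    using True by (auto intro!: derivative_eq_intros)
  then show ?thesis
    by (rule has_field_derivative_transform_within_open[where S = "{r<..}"]) (use True in auto)
next
  case False
  have "((\<lambda>x. ln (r - x)) has_real_derivative 1 / (s - r)) (at s)"
    using False assms by (auto intro!: derivative_eq_intros simp: field_simps)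
  then show ?thesis
    by (rule has_field_derivative_transform_within_open[where S = "{..<r}"]) (use False assms in auto)
qed

lemma one_minus_mult_plus_sqrt_pos:
  fixes r x :: real
  assumes "\<bar>r\<bar> < 1" "\<bar>x\<bar> \<le> 1"
  shows "0 < 1 - r * x + sqrt (1 - r\<^sup>2) * sqrt (1 - x\<^sup>2)"
proof -
  have "\<bar>r * x\<bar> \<le> \<bar>r\<bar>"
    using assms by (simp add: abs_mult mult_left_le)
  moreover have "0 \<le> sqrt (1 - r\<^sup>2) * sqrt (1 - x\<^sup>2)"
    using assms by (simp add: abs_square_le_1 less_imp_le abs_square_less_1)
  ultimately show ?thesis
    using assms by linarith
qed

lemma DERIV_sqrt_one_minus_sq:
  fixes s :: real
  assumes "-1 < s" "s < 1"
  shows "((\<lambda>x. sqrt (1 - x\<^sup>2)) has_real_derivative - s / sqrt (1 - s\<^sup>2)) (at s)"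
proof -
  have "s\<^sup>2 < 1"
    using assms by (simp add: abs_square_less_1)
  then show ?thesis
    by (auto intro!: derivative_eq_intros simp: field_simps)
qed

text \<open>With \<open>\<rho> = sqrt (1 - r\<^sup>2)\<close> and \<open>w = sqrt (1 - x\<^sup>2)\<close> one has
  \<open>w / (x - r) = \<rho>\<^sup>2 / ((x - r) w) - (x + r) / w\<close>; the logarithms integrate the first summand,
  \<open>r * arccos x + w\<close> the second.\<close>
lemma sqrt_div_diff_antiderivative:
  fixes r s :: real
  defines "\<rho> \<equiv> sqrt (1 - r\<^sup>2)"
  assumes r: "\<bar>r\<bar> < 1" and s: "-1 < s" "s < 1" "s \<noteq> r"
  shows "((\<lambda>x. (r * arccos x + sqrt (1 - x\<^sup>2) - \<rho> * ln (1 - r * x + \<rho> * sqrt (1 - x\<^sup>2)))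
            + \<rho> * ln \<bar>x - r\<bar>)
          has_real_derivative sqrt (1 - s\<^sup>2) / (s - r)) (at s)"
proof -
  define w where "w = sqrt (1 - s\<^sup>2)"
  define N where "N = 1 - r * s + \<rho> * w"
  have "s\<^sup>2 < 1"
    using s by (simp add: abs_square_less_1)
  then have w: "0 < w" "w\<^sup>2 = 1 - s\<^sup>2"
    unfolding w_def by auto
  have \<rho>: "\<rho>\<^sup>2 = 1 - r\<^sup>2"
    unfolding \<rho>_def using r by (simp add: abs_square_less_1 less_imp_le)
  have N: "0 < N"
    unfolding N_def w_def \<rho>_def using r s by (intro one_minus_mult_plus_sqrt_pos) auto
  have dw: "((\<lambda>x. sqrt (1 - x\<^sup>2)) has_real_derivative - s / w) (at s)"
    unfolding w_def using s(1,2) by (rule DERIV_sqrt_one_minus_sq)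
  have dN: "((\<lambda>x. 1 - r * x + \<rho> * sqrt (1 - x\<^sup>2))
      has_real_derivative 0 - r * 1 + \<rho> * (- s / w)) (at s)"
    by (intro DERIV_add DERIV_diff DERIV_const DERIV_cmult DERIV_ident dw)
  define E where "E = r * inverse (- w) + - s / w - \<rho> * (inverse N * (0 - r * 1 + \<rho> * (- s / w)))
    + \<rho> * (1 / (s - r))"
  have deriv: "((\<lambda>x. (r * arccos x + sqrt (1 - x\<^sup>2)
      - \<rho> * ln (1 - r * x + \<rho> * sqrt (1 - x\<^sup>2))) + \<rho> * ln \<bar>x - r\<bar>) has_real_derivative E) (at s)"
    unfolding E_def w_def N_def
    by (rule DERIV_add[OF DERIV_diff[OF DERIV_add[OF DERIV_cmult[OF DERIV_arccos[OF s(1,2)]]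
          dw[unfolded w_def]] DERIV_cmult[OF DERIV_chain2[OF DERIV_ln[OF N[unfolded N_def w_def]]
          dN[unfolded w_def]]]] DERIV_cmult[OF DERIV_ln_abs_diff[OF s(3)]]])
  have "E = (\<rho> * (r * w + \<rho> * s) * (s - r) - (s + r) * (s - r) * N + \<rho> * w * N)
      / (w * N * (s - r))"
    unfolding E_def using w(1) N s(3) by (simp add: field_simps)
  also have "\<dots> = w\<^sup>2 * N / (w * N * (s - r))"
    unfolding N_def using w(2) \<rho> by algebra
  also have "\<dots> = w / (s - r)"
    using w(1) N by (simp add: power2_eq_square)
  finally show ?thesis
    using deriv unfolding w_def by simp
qed

lemma has_cpv_sin_arccos:
  assumes r: "\<bar>r\<bar> < 1"
  shows "has_cpv (\<lambda>s. sin (arccos s)) r (- pi * r)"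
proof -
  define \<rho> where "\<rho> = sqrt (1 - r\<^sup>2)"
  define A where
    "A x = r * arccos x + sqrt (1 - x\<^sup>2) - \<rho> * ln (1 - r * x + \<rho> * sqrt (1 - x\<^sup>2))" for x
  have "continuous_on {-1..1} A"
    unfolding A_def \<rho>_def using r one_minus_mult_plus_sqrt_pos[OF r]
    by (intro continuous_intros) (auto simp: abs_le_iff less_le)
  moreover have "((\<lambda>x. A x + \<rho> * ln \<bar>x - r\<bar>) has_real_derivative sin (arccos s) / (s - r)) (at s)"
    if "-1 < s" "s < 1" "s \<noteq> r" for s
    using sqrt_div_diff_antiderivative[OF r that] that
    unfolding A_def \<rho>_def by (simp add: sin_arccos)
  ultimately have "has_cpv (\<lambda>s. sin (arccos s)) r (A 1 - A (-1) + \<rho> * ln ((1 - r) / (1 + r)))"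
    by (rule has_cpv_by_antiderivative[OF r])
  also have "A 1 - A (-1) + \<rho> * ln ((1 - r) / (1 + r)) = - pi * r"
    unfolding A_def using r by (simp add: ln_div algebra_simps abs_less_iff)
  finally show ?thesis .
qed

lemma has_integral_sin_mult_arccos:
  "((\<lambda>s. sin ((real k + 1) * arccos s)) has_integral (if k = 0 then pi / 2 else 0)) {-1..1}"
proof -
  define g where "g j t = (if j = 0 then t else sin (real j * t) / real j)" for j :: nat and t
  define G where "G t = (g k t - g (k + 2) t) / 2" for t
  have g': "(g j has_real_derivative cos (real j * t)) (at t)" for j t
    unfolding g_def by (cases "j = 0") (auto intro!: derivative_eq_intros)
  have G': "(G has_real_derivative sin ((real k + 1) * t) * sin t) (at t)" for t
  proof -
    have "sin ((real k + 1) * t) * sin t = (cos (real k * t) - cos (real (k + 2) * t)) / 2"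
      by (simp add: sin_times_sin algebra_simps)
    then show ?thesis
      unfolding G_def by (simp only:) (intro DERIV_cdivide DERIV_diff g')
  qed
  have "((\<lambda>s. sin ((real k + 1) * arccos s))
      has_integral - G (arccos 1) - - G (arccos (-1))) {-1..1}"
  proof (rule fundamental_theorem_of_calculus_interior)
    show "continuous_on {-1..1} (\<lambda>s. - G (arccos s))"
    proof (intro continuous_on_minus continuous_on_compose2[OF _ continuous_on_arccos'])
      show "continuous_on UNIV G"
        by (intro continuous_at_imp_continuous_on ballI DERIV_isCont[OF G'])
    qed auto
    show "((\<lambda>s. - G (arccos s)) has_vector_derivative sin ((real k + 1) * arccos s)) (at s)"
      if "s \<in> {-1<..<1}" for s
    proof -
      have "((\<lambda>s. - G (arccos s)) has_real_derivative
          - (sin ((real k + 1) * arccos s) * sin (arccos s) * inverse (- sqrt (1 - s\<^sup>2)))) (at s)"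
        using that by (intro DERIV_minus DERIV_chain2[OF G' DERIV_arccos]) auto
      moreover have "sin (arccos s) = sqrt (1 - s\<^sup>2)" "0 < sqrt (1 - s\<^sup>2)"
        using that by (auto simp: sin_arccos abs_square_less_1)
      ultimately show ?thesis
        unfolding has_real_derivative_iff_has_vector_derivative[symmetric]
        by (simp add: mult.assoc)
    qed
  qed auto
  moreover have "- G (arccos 1) - - G (arccos (-1)) = (if k = 0 then pi / 2 else 0)"
    using sin_npi[of "k + 2"] by (simp add: G_def g_def add.commute)
  ultimately show ?thesis
    by simp
qed

lemma has_cpv_sin_mult_arccos_Suc_Suc:
  assumes r: "\<bar>r\<bar> < 1"
    and L0: "has_cpv (\<lambda>s. sin (real k * arccos s)) r L0"
    and L1: "has_cpv (\<lambda>s. sin ((real k + 1) * arccos s)) r L1"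
  shows "has_cpv (\<lambda>s. sin ((real k + 2) * arccos s)) r
           ((if k = 0 then pi else 0) + 2 * r * L1 - L0)"
proof -
  have "(\<lambda>s. 2 * sin ((real k + 1) * arccos s)) integrable_on {-1..1}"
    by (intro integrable_continuous_real continuous_intros) auto
  from has_cpv_mult_diff[OF this r]
  have "has_cpv (\<lambda>s. (s - r) * (2 * sin ((real k + 1) * arccos s))) r (if k = 0 then pi else 0)"
    using has_integral_sin_mult_arccos[of k] by (simp add: integral_unique split: if_splits)
  then have cpv: "has_cpv (\<lambda>s. (s - r) * (2 * sin ((real k + 1) * arccos s))
      + 2 * r * sin ((real k + 1) * arccos s) + (- 1) * sin (real k * arccos s)) r
      ((if k = 0 then pi else 0) + 2 * r * L1 + (- 1) * L0)"
    by (intro has_cpv_add has_cpv_cmult L0 L1)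
  have eq: "(s - r) * (2 * sin ((real k + 1) * arccos s)) + 2 * r * sin ((real k + 1) * arccos s)
      + (- 1) * sin (real k * arccos s) = sin ((real k + 2) * arccos s)" if "s \<in> {-1..1}" for s
  proof -
    have "sin ((real k + 2) * arccos s) + sin (real k * arccos s)
        = 2 * sin ((real k + 1) * arccos s) * cos (arccos s)"
      by (simp add: sin_plus_sin algebra_simps add_divide_distrib)
    then show ?thesis
      using that by (simp add: algebra_simps)
  qed
  show ?thesis
    using has_cpv_cong[OF eq r cpv] by simp
qed

lemma has_cpv_sin_mult_arccos:
  assumes r: "\<bar>r\<bar> < 1" and "0 < k"
  shows "has_cpv (\<lambda>s. sin (real k * arccos s)) r (- pi * cos (real k * arccos r))"
proof -
  \<comment> \<open>The correction at \<open>k = 0\<close> (where the integrand vanishes) absorbs the one nonzero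
    integral of the recurrence, so that the recurrence holds uniformly in \<open>k\<close>.\<close>
  define L where "L k = (if k = 0 then pi else 0) - pi * cos (real k * arccos r)" for k :: nat
  have "has_cpv (\<lambda>s. sin (real k * arccos s)) r (L k)
      \<and> has_cpv (\<lambda>s. sin ((real k + 1) * arccos s)) r (L (k + 1))"
  proof (induction k)
    case 0
    show ?case
      using has_cpv_zero[of r] has_cpv_sin_arccos[OF r] r by (simp add: L_def)
  next
    case (Suc k)
    have "cos ((real k + 2) * arccos r) + cos (real k * arccos r)
        = 2 * cos ((real k + 1) * arccos r) * r"
      using r by (simp add: cos_plus_cos algebra_simps add_divide_distrib)
    then have "pi * (cos ((real k + 2) * arccos r) + cos (real k * arccos r))
        = pi * (2 * cos ((real k + 1) * arccos r) * r)"
      by simp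
    then have "(if k = 0 then pi else 0) + 2 * r * L (k + 1) - L k = L (k + 2)"
      by (simp add: L_def algebra_simps)
    then show ?case
      using Suc has_cpv_sin_mult_arccos_Suc_Suc[OF r, of k "L k" "L (k + 1)"]
      by (simp add: add_ac)
  qed
  with \<open>0 < k\<close> show ?thesis
    by (simp add: L_def)
qed

lemma cis_diff_cis_minus_power_even:
  "(cis t - cis (- t)) ^ (2 * p) = (\<Sum>j = 0..2 * p.
     complex_of_real ((-1) ^ j * real (2 * p choose j)) * cis ((2 * real j - 2 * real p) * t))"
proof -
  have "(cis t - cis (- t)) ^ (2 * p)
      = (\<Sum>j\<le>2 * p. of_nat (2 * p choose j) * cis t ^ j * (- cis (- t)) ^ (2 * p - j))"
    using binomial_ring[of "cis t" "- cis (- t)"] by simp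
  also have "\<dots> = (\<Sum>j = 0..2 * p.
      complex_of_real ((-1) ^ j * real (2 * p choose j)) * cis ((2 * real j - 2 * real p) * t))"
    unfolding atLeast0AtMost
  proof (rule sum.cong)
    fix j assume "j \<in> {..2 * p}"
    then have "j \<le> 2 * p" by simp
    then have "(- cis (- t)) ^ (2 * p - j) = (-1) ^ j * cis (- t) ^ (2 * p - j)"
      unfolding power_minus[of "cis (- t)"]
      by (simp add: neg_one_power_add_eq_neg_one_power_diff[symmetric] power_add power_mult)
    moreover have "cis t ^ j * cis (- t) ^ (2 * p - j)
        = cis (real j * t + real (2 * p - j) * (- t))"
      by (simp only: Complex.DeMoivre cis_mult)
    moreover have "real j * t + real (2 * p - j) * (- t) = (2 * real j - 2 * real p) * t"
      using \<open>j \<le> 2 * p\<close> by (simp add: of_nat_diff algebra_simps)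
    ultimately show "of_nat (2 * p choose j) * cis t ^ j * (- cis (- t)) ^ (2 * p - j)
        = complex_of_real ((-1) ^ j * real (2 * p choose j)) * cis ((2 * real j - 2 * real p) * t)"
      by (simp add: mult_ac)
  qed simp
  finally show ?thesis .
qed

lemma sin_power_even_mult_sin:
  fixes t a :: real
  shows "sin t ^ (2 * p) * sin (a * t) = (-1/4) ^ p *
    (\<Sum>j = 0..2 * p. (-1) ^ j * real (2 * p choose j) * sin ((a + 2 * real j - 2 * real p) * t))"
proof -
  have "(2 * \<i>) ^ (2 * p) = (-4 :: complex) ^ p"
    by (simp add: power_mult)
  then have "complex_of_real ((-4) ^ p * sin t ^ (2 * p))
      = (complex_of_real (sin t) * (2 * \<i>)) ^ (2 * p)"
    by (simp add: power_mult_distrib)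
  also have "complex_of_real (sin t) * (2 * \<i>) = cis t - cis (- t)"
    by (simp add: complex_eq_iff)
  finally have expansion: "complex_of_real ((-4) ^ p * sin t ^ (2 * p)) = (\<Sum>j = 0..2 * p.
      complex_of_real ((-1) ^ j * real (2 * p choose j)) * cis ((2 * real j - 2 * real p) * t))"
    unfolding cis_diff_cis_minus_power_even .
  have "(-4) ^ p * sin t ^ (2 * p) * sin (a * t)
      = Im (complex_of_real ((-4) ^ p * sin t ^ (2 * p)) * cis (a * t))"
    by simp
  also have "\<dots> = (\<Sum>j = 0..2 * p.
      (-1) ^ j * real (2 * p choose j) * sin ((a + 2 * real j - 2 * real p) * t))"
    unfolding expansion sum_distrib_right mult.assoc cis_mult by (simp add: algebra_simps)
  finally have scaled: "(-4) ^ p * sin t ^ (2 * p) * sin (a * t) = (\<Sum>j = 0..2 * p.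
      (-1) ^ j * real (2 * p choose j) * sin ((a + 2 * real j - 2 * real p) * t))" .
  have "(-1/4 :: real) ^ p * (-4) ^ p = 1"
    by (simp flip: power_mult_distrib)
  then have "sin t ^ (2 * p) * sin (a * t)
      = (-1/4) ^ p * ((-4) ^ p * sin t ^ (2 * p) * sin (a * t))"
    by (metis mult.assoc mult_1)
  then show ?thesis
    unfolding scaled .
qed

text \<open>At \<open>s = \<plusminus>1\<close> the definition gives \<open>chebU n s = 0\<close> (division by zero), but both sides
  vanish there.\<close>
lemma chebU_mult_sin_arccos:
  assumes "s \<in> {-1..1}"
  shows "chebU n s * sin (arccos s) = sin ((real n + 1) * arccos s)"
proof (cases "sin (arccos s) = 0")
  case True
  then obtain i :: int where "arccos s = of_int i * pi"
    using sin_zero_iff_int2 by blast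
  then have "(real n + 1) * arccos s = pi * of_int ((int n + 1) * i)"
    by simp
  with True show ?thesis
    by (metis sin_npi_int mult_zero_right)
qed (simp add: chebU_def)

lemma one_minus_square_powr_half_odd:
  assumes "1 \<le> m" "s \<in> {-1..1}"
  shows "(1 - s\<^sup>2) powr (real m - 1/2) = sin (arccos s) ^ (2 * m - 1)"
proof -
  have w: "sin (arccos s) = sqrt (1 - s\<^sup>2)" "0 \<le> 1 - s\<^sup>2"
    using assms(2) by (auto simp: sin_arccos abs_square_le_1)
  have "real m - 1/2 = 1/2 * real (2 * m - 1)"
    using assms(1) by (simp add: of_nat_diff)
  then have "(1 - s\<^sup>2) powr (real m - 1/2) = ((1 - s\<^sup>2) powr (1/2)) powr real (2 * m - 1)"
    by (simp only: powr_powr)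
  also have "\<dots> = sqrt (1 - s\<^sup>2) ^ (2 * m - 1)"
  proof (cases "1 - s\<^sup>2 = 0")
    case False
    with w(2) have "0 < sqrt (1 - s\<^sup>2)"
      by simp
    then show ?thesis
      by (simp only: powr_half_sqrt[OF w(2)] powr_realpow)
  qed (use assms(1) in simp)
  finally have "(1 - s\<^sup>2) powr (real m - 1/2) = sqrt (1 - s\<^sup>2) ^ (2 * m - 1)" .
  with w show ?thesis
    by simp
qed

lemma chebU_weight_expansion:
  assumes m: "1 \<le> m" "2 * m \<le> n + 2" and s: "s \<in> {-1..1}"
  shows "chebU n s * (1 - s\<^sup>2) powr (real m - 1/2) = (-1/4) ^ (m - 1) * (\<Sum>j = 0..2 * m - 2.
    (-1) ^ j * real ((2 * m - 2) choose j) * sin (real (n + 3 + 2 * j - 2 * m) * arccos s))"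
proof -
  have "2 * m - 1 = Suc (2 * (m - 1))" and double: "2 * (m - 1) = 2 * m - 2"
    using m(1) by auto
  have freq: "real n + 1 + 2 * real j - 2 * real (m - 1) = real (n + 3 + 2 * j - 2 * m)"
    for j
    using m by (simp add: of_nat_diff)
  have "chebU n s * (1 - s\<^sup>2) powr (real m - 1/2)
      = sin (arccos s) ^ (2 * (m - 1)) * sin ((real n + 1) * arccos s)"
    using chebU_mult_sin_arccos[OF s] \<open>2 * m - 1 = _\<close>
    by (simp add: one_minus_square_powr_half_odd[OF m(1) s] mult_ac)
  also have "\<dots> = (-1/4) ^ (m - 1) * (\<Sum>j = 0..2 * m - 2.
      (-1) ^ j * real ((2 * m - 2) choose j) * sin (real (n + 3 + 2 * j - 2 * m) * arccos s))"
    using sin_power_even_mult_sin[of "arccos s" "m - 1" "real n + 1"]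
    unfolding double freq .
  finally show ?thesis .
qed

lemma cpv_chebU_weight:
  assumes m: "1 \<le> m" "2 * m \<le> n + 2" and x: "\<bar>x\<bar> < 1"
  shows "cpv (\<lambda>s. chebU n s * (1 - s\<^sup>2) powr (real m - 1/2)) x
    = - pi * (-1/4) ^ (m - 1) * (\<Sum>j = 0..2 * m - 2.
        (-1) ^ j * real ((2 * m - 2) choose j) * cos (real (n + 3 + 2 * j - 2 * m) * arccos x))"
proof (rule cpv_eqI)
  let ?c = "\<lambda>j. (-1) ^ j * real ((2 * m - 2) choose j)" and ?k = "\<lambda>j. n + 3 + 2 * j - 2 * m"
  have "has_cpv (\<lambda>s. (-1/4) ^ (m - 1) * (\<Sum>j = 0..2 * m - 2. ?c j * sin (real (?k j) * arccos s)))
      x ((-1/4) ^ (m - 1) * (\<Sum>j = 0..2 * m - 2. ?c j * (- pi * cos (real (?k j) * arccos x))))"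
    using m x by (intro has_cpv_cmult has_cpv_sum has_cpv_sin_mult_arccos) auto
  then have "has_cpv (\<lambda>s. chebU n s * (1 - s\<^sup>2) powr (real m - 1/2)) x
      ((-1/4) ^ (m - 1) * (\<Sum>j = 0..2 * m - 2. ?c j * (- pi * cos (real (?k j) * arccos x))))"
    by (rule has_cpv_cong[rotated, OF x]) (simp add: chebU_weight_expansion[OF m])
  then show "has_cpv (\<lambda>s. chebU n s * (1 - s\<^sup>2) powr (real m - 1/2)) x
      (- pi * (-1/4) ^ (m - 1) * (\<Sum>j = 0..2 * m - 2. ?c j * cos (real (?k j) * arccos x)))"
    by (simp add: sum_distrib_left mult_ac)
qed

text \<open>For \<open>k = 0\<close> the index \<open>k - 1\<close> is truncated, but the factor \<open>real k\<close> kills the term.\<close>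
lemma DERIV_cos_mult_arccos:
  assumes x: "-1 < x" "x < 1"
  shows "((\<lambda>y. cos (real k * arccos y)) has_real_derivative real k * chebU (k - 1) x) (at x)"
proof (cases k)
  case (Suc j)
  have "sin (arccos x) = sqrt (1 - x\<^sup>2)" "0 < sqrt (1 - x\<^sup>2)"
    using x by (auto simp: sin_arccos abs_square_less_1)
  with Suc have derivative_eq:
    "- sin (real k * arccos x) * (real k * inverse (- sqrt (1 - x\<^sup>2))) = real k * chebU (k - 1) x"
    by (simp add: chebU_def field_simps)
  have "((\<lambda>y. cos (real k * arccos y)) has_real_derivative
      - sin (real k * arccos x) * (real k * inverse (- sqrt (1 - x\<^sup>2)))) (at x)"
    by (rule DERIV_chain2[OF DERIV_cos DERIV_cmult[OF DERIV_arccos[OF x]]])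
  then show ?thesis
    unfolding derivative_eq .
qed simp

lemma hadamard2_chebU_weight:
  assumes m: "1 \<le> m" "2 * m \<le> n + 2" and r: "\<bar>r\<bar> < 1"
  shows "hadamard2 (\<lambda>s. chebU n s * (1 - s\<^sup>2) powr (real m - 1/2)) r
    = - pi * (-1/4) ^ (m - 1) * (\<Sum>j = 0..2 * m - 2. (-1) ^ j * real ((2 * m - 2) choose j)
        * (real (n + 3 + 2 * j - 2 * m) * chebU (n + 3 + 2 * j - 2 * m - 1) r))"
proof -
  let ?c = "\<lambda>j. (-1) ^ j * real ((2 * m - 2) choose j)" and ?k = "\<lambda>j. n + 3 + 2 * j - 2 * m"
  let ?D = "\<lambda>s. chebU n s * (1 - s\<^sup>2) powr (real m - 1/2)"
  define \<Phi> where
    "\<Phi> x = - pi * (-1/4) ^ (m - 1) * (\<Sum>j = 0..2 * m - 2. ?c j * cos (real (?k j) * arccos x))" for x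
  have deriv: "(\<Phi> has_real_derivative - pi * (-1/4) ^ (m - 1)
      * (\<Sum>j = 0..2 * m - 2. ?c j * (real (?k j) * chebU (?k j - 1) r))) (at r)"
    unfolding \<Phi>_def using r by (intro DERIV_cmult DERIV_sum DERIV_cos_mult_arccos) auto
  have agree: "\<Phi> x = cpv ?D x" if "x \<in> {-1<..<1}" for x
    unfolding \<Phi>_def using that by (intro cpv_chebU_weight[OF m, symmetric]) auto
  have "(cpv ?D has_real_derivative - pi * (-1/4) ^ (m - 1)
      * (\<Sum>j = 0..2 * m - 2. ?c j * (real (?k j) * chebU (?k j - 1) r))) (at r)"
    by (rule has_field_derivative_transform_within_open[where S = "{-1<..<1}", OF deriv _ _ agree])
      (use r in auto)
  then show ?thesis
    unfolding hadamard2_def by (rule DERIV_imp_deriv)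
qed

theorem mainTheorem4:
  fixes m n :: nat and r :: real
  assumes "m \<ge> 2" and "n \<ge> 2 * m - 1" and "\<bar>r\<bar> < 1"
  shows "hadamard2 (\<lambda>s. chebU n s * (1 - s\<^sup>2) powr (real m - 1/2)) r
       = pi * (-1) ^ m * (1/2) ^ (2 * m - 2) *
         (\<Sum>j = 0..2 * m - 2. (-1) ^ j * real ((2 * m - 2) choose j)
             * (real n + 3 - 2 * real m + 2 * real j) * chebU (n + 2 + 2 * j - 2 * m) r)"
proof -
  have m: "1 \<le> m" "2 * m \<le> n + 2"
    using assms(1,2) by auto
  have coeff: "- pi * (-1/4) ^ (m - 1) = pi * (-1) ^ m * (1/2) ^ (2 * m - 2)"
    using m(1) by (cases m) (auto simp: power_mult power_mult_distrib[symmetric] power2_eq_square)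
  have freq: "real (n + 3 + 2 * j - 2 * m) = real n + 3 - 2 * real m + 2 * real j"
    "n + 3 + 2 * j - 2 * m - 1 = n + 2 + 2 * j - 2 * m" for j
    using m by (auto simp: of_nat_diff)
  show ?thesis
    unfolding hadamard2_chebU_weight[OF m assms(3)] coeff freq by (simp only: mult.assoc)
qed

end
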